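(* Let $f=\min_{1\le j\le m}\{a_j+\sum_{i=1}^n t_{j,i}X_i\}$ be a tropical polynomial in $n$ variables, and for $N\ge 1$ let $U_N\subset\mathbb{R}^{N^n}$ be the set of points satisfying all linearizations of $f$ on the grid $T_N$. Then for every partition of the grid $T_N$ into subgrids that are cubes with sides $q_1,\dots,q_R$ one has $\dim(U_N)\le \dim(U_{q_1})+\dots+\dim(U_{q_R})$. Consequently the limit $$H(f):=\lim_{N\to\infty}\frac{\dim(U_N)}{N^n}$$ exists and equals $\inf_{N\ge 1}\dim(U_N)/N^n$.
   Context: A tropical polynomial in $n$ variables is an expression $f=\min_{1\le j\le m}\{a_j+\sum_{i=1}^n t_{j,i}X_i\}$ with $a_j\in\mathbb{R}$ and pairwise distinct exponent vectors $(t_{j,1},\dots,t_{j,n})\in\mathbb{Z}^n$. For an integer $N\ge1$ let $T_N=\{0,\dots,N-1\}^n\subset\mathbb{Z}^n$, and consider variables $u(k_1,\dots,k_n)$, $(k_1,\dots,k_n)\in T_N$, so that points $u$ lie in $\mathbb{R}^{T_N}\cong\mathbb{R}^{N^n}$. For each shift $(s_1,\dots,s_n)\in\mathbb{Z}^n$ such that $(t_{j,1}+s_1,\dots,t_{j,n}+s_n)\in T_N$ for all $1\le j\le m$, the linearization of $f$ with this shift is the tropical linear form $\min_{1\le j\le m}\{a_j+u(t_{j,1}+s_1,\dots,t_{j,n}+s_n)\}$; a point $u$ satisfies it if this minimum is attained at least twice. $U_N$ is the set of all $u\in\mathbb{R}^{N^n}$ satisfying all such linearizations; it is a finite union of convex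 polyhedra and $\dim$ denotes its dimension (maximal dimension of a polyhedron in it). A subgrid with side $q$ is a translate $v+T_q\subset T_N$, identified with $T_q$ via the translation. *)

theory Defs
  imports "HOL-Analysis.Analysis"
begin

text \<open>Lattice points of Z^n are represented as functions nat => int that vanish
  at all coordinates i >= n.  The grid T_N = {0,...,N-1}^n:\<close>

definition grid :: "nat \<Rightarrow> nat \<Rightarrow> (nat \<Rightarrow> int) set" where
  "grid n N = {k. (\<forall>i<n. 0 \<le> k i \<and> k i < int N) \<and> (\<forall>i\<ge>n. k i = 0)}"

definition subgrid :: "nat \<Rightarrow> (nat \<Rightarrow> int) \<Rightarrow> nat \<Rightarrow> (nat \<Rightarrow> int) set" where
  "subgrid n v q = {(\<lambda>i. v i + k i) | k. k \<in> grid n q}"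

text \<open>The tropical polynomial f = min_{j<m} (a j + sum_{i<n} t j i * X_i).
  Exponent vector of monomial j shifted by s (only coordinates i < n are used).\<close>

definition shifted :: "nat \<Rightarrow> (nat \<Rightarrow> nat \<Rightarrow> int) \<Rightarrow> nat \<Rightarrow> (nat \<Rightarrow> int) \<Rightarrow> (nat \<Rightarrow> int)" where
  "shifted n t j s = (\<lambda>i. if i < n then t j i + s i else 0)"

definition admissible_shift ::
  "nat \<Rightarrow> nat \<Rightarrow> (nat \<Rightarrow> nat \<Rightarrow> int) \<Rightarrow> nat \<Rightarrow> (nat \<Rightarrow> int) \<Rightarrow> bool" where
  "admissible_shift n m t N s \<longleftrightarrow>
     (\<forall>i\<ge>n. s i = 0) \<and> (\<forall>j<m. shifted n t j s \<in> grid n N)"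

definition sat_linearization ::
  "nat \<Rightarrow> nat \<Rightarrow> (nat \<Rightarrow> real) \<Rightarrow> (nat \<Rightarrow> nat \<Rightarrow> int) \<Rightarrow> (nat \<Rightarrow> int) \<Rightarrow> ((nat \<Rightarrow> int) \<Rightarrow> real) \<Rightarrow> bool" where
  "sat_linearization n m a t s u \<longleftrightarrow>
     (\<exists>j1<m. \<exists>j2<m. j1 \<noteq> j2 \<and>
        a j1 + u (shifted n t j1 s) = a j2 + u (shifted n t j2 s) \<and>
        (\<forall>j<m. a j1 + u (shifted n t j1 s) \<le> a j + u (shifted n t j s)))"

text \<open>Points of R^{T_N} are functions (nat => int) => real vanishing outside T_N.
  U_N is the set of such points satisfying all linearizations.\<close>

definition U_set ::
  "nat \<Rightarrow> nat \<Rightarrow> (nat \<Rightarrow> real) \<Rightarrow> (nat \<Rightarrow> nat \<Rightarrow> int) \<Rightarrow> nat \<Rightarrow> ((nat \<Rightarrow> int) \<Rightarrow> real) set" where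
  "U_set n m a t N =
     {u. (\<forall>k. k \<notin> grid n N \<longrightarrow> u k = 0) \<and>
         (\<forall>s. admissible_shift n m t N s \<longrightarrow> sat_linearization n m a t s u)}"

definition polyhedron_on :: "'a set \<Rightarrow> ('a \<Rightarrow> real) set \<Rightarrow> bool" where
  "polyhedron_on T P \<longleftrightarrow>
     (\<exists>C :: (('a \<Rightarrow> real) \<times> real) set. finite C \<and>
        P = {u. (\<forall>k. k \<notin> T \<longrightarrow> u k = 0) \<and> (\<forall>(c, b)\<in>C. (\<Sum>k\<in>T. c k * u k) \<le> b)})"

definition aff_indep_on :: "'a set \<Rightarrow> (nat \<Rightarrow> 'a \<Rightarrow> real) \<Rightarrow> nat \<Rightarrow> bool" where
  "aff_indep_on T p d \<longleftrightarrow>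
     (\<forall>c :: nat \<Rightarrow> real. (\<forall>k\<in>T. (\<Sum>i\<in>{1..d}. c i * (p i k - p 0 k)) = 0)
        \<longrightarrow> (\<forall>i\<in>{1..d}. c i = 0))"

definition affdim_on :: "'a set \<Rightarrow> ('a \<Rightarrow> real) set \<Rightarrow> int" where
  "affdim_on T P = (if P = {} then -1 else
     Max {int d | d. \<exists>p. (\<forall>i\<le>d. p i \<in> P) \<and> aff_indep_on T p d})"

text \<open>Dimension of a finite union of convex polyhedra: maximal dimension of a
  polyhedron contained in it.\<close>

definition pdim_on :: "'a set \<Rightarrow> ('a \<Rightarrow> real) set \<Rightarrow> int" where
  "pdim_on T S = Max {affdim_on T P | P. polyhedron_on T P \<and> P \<subseteq> S}"

definition dimU :: "nat \<Rightarrow> nat \<Rightarrow> (nat \<Rightarrow> real) \<Rightarrow> (nat \<Rightarrow> nat \<Rightarrow> int) \<Rightarrow> nat \<Rightarrow> int" where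
  "dimU n m a t N = pdim_on (grid n N) (U_set n m a t N)"

end

theory Submission
  imports Defs "HOL-Library.Function_Algebras" "HOL-Computational_Algebra.Polynomial"
begin

(* Let P be a polyhedron inside U_N containing affinely independent points
   p_0, ..., p_d. For small e > 0 the point x = p_0 + (SUM i. e^i (p_i - p_0)) is generic: one of
   the inequalities a_j1 + u(t_j1 + s) <= a_j2 + u(t_j2 + s) is tight at x only if it is tight at
   every p_i, because its defect at x is a polynomial in e. Hence for small delta > 0 the points
   y_i = x + delta (p_i - x) are affinely independent and satisfy every such inequality that x
   satisfies. These inequalities cut out a polyhedron (the cell of x) inside U_N, and restriction
   to a subgrid v + T_q maps it into the cell of the restricted point, a polyhedron inside U_q.
   So the d-dimensional span of the y_i - y_0 embeds into a product of spaces of dimensions at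
   most dim U_(q_r).

   Limit. Tiling T_N by (N div M)^n cubes of side M and unit cubes gives
   dim U_N / N^n <= dim U_M / M^n + n M dim U_1 / N, which forces convergence to the infimum. *)

section \<open>Affine dimension in spaces of real functions\<close>

global_interpretation real_fun: vector_space "\<lambda>(c::real) (f::'a \<Rightarrow> real) k. c * f k"
  by unfold_locales (auto simp: fun_eq_iff algebra_simps)

lemma sum_fun_apply: "(\<Sum>a\<in>A. f a) x = (\<Sum>a\<in>A. f a x)"
  by (induction A rule: infinite_finite_induct) auto

definition basis_fun :: "'a \<Rightarrow> 'a \<Rightarrow> real" where
  "basis_fun k0 = (\<lambda>k. if k = k0 then 1 else 0)"

lemma sum_basis_fun_mult:
  assumes "finite T" "k0 \<in> T"
  shows "(\<Sum>k\<in>T. basis_fun k0 k * u k) = u k0"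
proof -
  have "(\<Sum>k\<in>T. basis_fun k0 k * u k) = (\<Sum>k\<in>T. if k = k0 then u k0 else 0)"
    by (rule sum.cong) (auto simp: basis_fun_def)
  then show ?thesis using assms by simp
qed

lemma in_span_basis_fun:
  assumes "finite T" "\<forall>k. k \<notin> T \<longrightarrow> w k = 0"
  shows "w \<in> real_fun.span (basis_fun ` T)"
proof -
  have "w = (\<Sum>k0\<in>T. (\<lambda>k. w k0 * basis_fun k0 k))"
    using assms by (auto simp: fun_eq_iff sum_fun_apply basis_fun_def if_distrib cong: if_cong)
  also have "\<dots> \<in> real_fun.span (basis_fun ` T)"
    by (intro real_fun.span_sum real_fun.span_scale real_fun.span_base) auto
  finally show ?thesis .
qed

text \<open>Differences are cut off outside T, where aff_indep_on does not look, so that affine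
  independence becomes linear independence.\<close>

definition diff_on :: "'a set \<Rightarrow> (nat \<Rightarrow> 'a \<Rightarrow> real) \<Rightarrow> nat \<Rightarrow> 'a \<Rightarrow> real" where
  "diff_on T p i = (\<lambda>k. if k \<in> T then p i k - p 0 k else 0)"

lemma aff_indep_on_diff_on:
  assumes ai: "aff_indep_on T p d"
  shows "inj_on (diff_on T p) {1..d}" and "real_fun.independent (diff_on T p ` {1..d})"
proof -
  show inj: "inj_on (diff_on T p) {1..d}"
  proof (rule inj_onI, rule ccontr)
    fix i j assume ij: "i \<in> {1..d}" "j \<in> {1..d}" "diff_on T p i = diff_on T p j" "i \<noteq> j"
    define c :: "nat \<Rightarrow> real" where "c l = of_bool (l = i) - of_bool (l = j)" for l
    have "(\<Sum>l\<in>{1..d}. c l * (p l k - p 0 k)) = 0" if k: "k \<in> T" for k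
    proof -
      have "(\<Sum>l\<in>{1..d}. c l * (p l k - p 0 k)) = (p i k - p 0 k) - (p j k - p 0 k)"
        using ij by (simp add: c_def left_diff_distrib sum_subtractf)
      also have "\<dots> = 0" using fun_cong[OF ij(3), of k] k by (simp add: diff_on_def)
      finally show ?thesis .
    qed
    with ai ij have "c i = 0" unfolding aff_indep_on_def by blast
    with ij show False by (simp add: c_def)
  qed
  show "real_fun.independent (diff_on T p ` {1..d})"
  proof (rule real_fun.independent_if_scalars_zero)
    fix f x assume s: "(\<Sum>x\<in>diff_on T p ` {1..d}. (\<lambda>k. f x * x k)) = 0"
      and x: "x \<in> diff_on T p ` {1..d}"
    have "(\<Sum>i\<in>{1..d}. (f \<circ> diff_on T p) i * (p i k - p 0 k)) = 0" if k: "k \<in> T" for k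
    proof -
      have "(\<Sum>i\<in>{1..d}. (f \<circ> diff_on T p) i * diff_on T p i k) = 0"
        using fun_cong[OF s, of k] sum.reindex[OF inj, of "\<lambda>x. f x * x k"]
        by (simp add: sum_fun_apply)
      then show ?thesis using k by (simp add: diff_on_def)
    qed
    with ai have "\<forall>i\<in>{1..d}. (f \<circ> diff_on T p) i = 0" unfolding aff_indep_on_def by blast
    with x show "f x = 0" by auto
  qed simp
qed

lemma aff_indep_on_le_card:
  assumes ai: "aff_indep_on T p d" and fT: "finite T"
  shows "d \<le> card T"
proof -
  note diff = aff_indep_on_diff_on[OF ai]
  have "diff_on T p ` {1..d} \<subseteq> real_fun.span (basis_fun ` T)"
    using fT by (auto intro!: in_span_basis_fun simp: diff_on_def)
  from real_fun.independent_span_bound[OF _ diff(2) this] fT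
  have "card (diff_on T p ` {1..d}) \<le> card (basis_fun ` T)" by simp
  also have "\<dots> \<le> card T" by (rule card_image_le[OF fT])
  finally show ?thesis using card_image[OF diff(1)] by simp
qed

lemma finite_affdim_candidates:
  assumes "finite T"
  shows "finite {int d | d. \<exists>p. (\<forall>i\<le>d. p i \<in> P) \<and> aff_indep_on T p d}"
  by (rule finite_subset[of _ "int ` {0..card T}"]) (use aff_indep_on_le_card[OF _ assms] in auto)

lemma affdim_on_ge:
  assumes "finite T" "\<forall>i\<le>d. p i \<in> P" "aff_indep_on T p d"
  shows "int d \<le> affdim_on T P"
proof -
  have "P \<noteq> {}" using assms(2) by auto
  then show ?thesis unfolding affdim_on_def using assms
    by (auto intro!: Max_ge finite_affdim_candidates)
qed

lemma affdim_on_witness: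
  assumes "finite T" "P \<noteq> {}"
  obtains d p where "affdim_on T P = int d" "\<forall>i\<le>d. p i \<in> P" "aff_indep_on T p d"
proof -
  obtain x where x: "x \<in> P" using assms by auto
  have ne: "{int d | d. \<exists>p. (\<forall>i\<le>d. p i \<in> P) \<and> aff_indep_on T p d} \<noteq> {}"
    using x by (auto intro!: exI[of _ 0] exI[of _ "\<lambda>_. x"] simp: aff_indep_on_def)
  have "affdim_on T P \<in> {int d | d. \<exists>p. (\<forall>i\<le>d. p i \<in> P) \<and> aff_indep_on T p d}"
    unfolding affdim_on_def if_not_P[OF assms(2)]
    by (rule Max_in[OF finite_affdim_candidates[OF assms(1)] ne])
  then show ?thesis using that by blast
qed

lemma affdim_on_bounds:
  assumes "finite T"
  shows "-1 \<le> affdim_on T P" "affdim_on T P \<le> int (card T)"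
proof (atomize(full), cases "P = {}")
  case False
  then obtain d p where "affdim_on T P = int d" "aff_indep_on T p d"
    using affdim_on_witness[OF assms] by metis
  then show "-1 \<le> affdim_on T P \<and> affdim_on T P \<le> int (card T)"
    using aff_indep_on_le_card[OF _ assms] by auto
qed (simp add: affdim_on_def)

lemma polyhedron_on_empty: "polyhedron_on T {}"
  unfolding polyhedron_on_def by (rule exI[of _ "{(\<lambda>_. 0, -1)}"]) auto

lemma finite_pdim_candidates:
  assumes "finite T"
  shows "finite {affdim_on T P | P. polyhedron_on T P \<and> P \<subseteq> S}"
  by (rule finite_subset[of _ "{-1..int (card T)}"]) (use affdim_on_bounds[OF assms] in auto)

lemma pdim_on_ge:
  assumes "finite T" "polyhedron_on T Q" "Q \<subseteq> S"
  shows "affdim_on T Q \<le> pdim_on T S"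
  unfolding pdim_on_def using assms by (auto intro!: Max_ge finite_pdim_candidates)

lemma pdim_on_le:
  assumes "finite T" "\<And>P. polyhedron_on T P \<Longrightarrow> P \<subseteq> S \<Longrightarrow> affdim_on T P \<le> X"
  shows "pdim_on T S \<le> X"
  unfolding pdim_on_def using assms polyhedron_on_empty[of T]
  by (subst Max_le_iff) (auto intro!: finite_pdim_candidates)

lemma polyhedron_on_singleton:
  assumes fT: "finite T" and u0: "\<forall>k. k \<notin> T \<longrightarrow> u0 k = 0"
  shows "polyhedron_on T {u0}"
proof -
  define C where "C = (\<lambda>k. (basis_fun k, u0 k)) ` T \<union> (\<lambda>k. (\<lambda>x. - basis_fun k x, - u0 k)) ` T"
  have "u = u0" if "\<forall>k. k \<notin> T \<longrightarrow> u k = 0" "\<forall>(c, b)\<in>C. (\<Sum>k\<in>T. c k * u k) \<le> b" for u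
  proof
    fix k show "u k = u0 k"
    proof (cases "k \<in> T")
      case True
      then have "(basis_fun k, u0 k) \<in> C" "((\<lambda>x. - basis_fun k x), - u0 k) \<in> C"
        by (auto simp: C_def)
      with that(2) have "(\<Sum>x\<in>T. basis_fun k x * u x) \<le> u0 k"
        "(\<Sum>x\<in>T. - basis_fun k x * u x) \<le> - u0 k" by fastforce+
      then show ?thesis using sum_basis_fun_mult[OF fT True, of u] by (simp add: sum_negf)
    qed (use that u0 in auto)
  qed
  moreover have "\<forall>(c, b)\<in>C. (\<Sum>k\<in>T. c k * u0 k) \<le> b"
    by (auto simp: C_def sum_basis_fun_mult[OF fT] sum_negf)
  ultimately have "{u0} = {u. (\<forall>k. k \<notin> T \<longrightarrow> u k = 0) \<and> (\<forall>(c, b)\<in>C. (\<Sum>k\<in>T. c k * u k) \<le> b)}"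
    using u0 by blast
  moreover have "finite C" using fT by (simp add: C_def)
  ultimately show ?thesis unfolding polyhedron_on_def by blast
qed

lemma pdim_on_nonneg:
  assumes "finite T" "u0 \<in> S" "\<forall>k. k \<notin> T \<longrightarrow> u0 k = 0"
  shows "0 \<le> pdim_on T S"
proof -
  have "int 0 \<le> affdim_on T {u0}"
    by (rule affdim_on_ge[OF assms(1), of 0 "\<lambda>_. u0"]) (auto simp: aff_indep_on_def)
  also have "\<dots> \<le> pdim_on T S"
    by (rule pdim_on_ge) (use assms polyhedron_on_singleton in auto)
  finally show ?thesis by simp
qed

lemma affdim_on_ge_card_independent:
  assumes fT: "finite T" and z0: "z0 \<in> Q" and fB: "finite B" and iB: "real_fun.independent B"
    and zb: "\<forall>b\<in>B. (\<lambda>k. z0 k + b k) \<in> Q" and vB: "\<forall>b\<in>B. \<forall>k. k \<notin> T \<longrightarrow> b k = 0"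
  shows "int (card B) \<le> affdim_on T Q"
proof -
  obtain g where g: "bij_betw g {1..card B} B" using ex_bij_betw_nat_finite_1[OF fB] by blast
  then have inj: "inj_on g {1..card B}" and gB: "\<And>i. i \<in> {1..card B} \<Longrightarrow> g i \<in> B"
    by (auto simp: bij_betw_def)
  define p where "p l = (if l = 0 then z0 else (\<lambda>k. z0 k + g l k))" for l
  have "aff_indep_on T p (card B)"
    unfolding aff_indep_on_def
  proof (intro allI impI)
    fix c assume h: "\<forall>k\<in>T. (\<Sum>i\<in>{1..card B}. c i * (p i k - p 0 k)) = 0"
    define f where "f b = c (the_inv_into {1..card B} g b)" for b
    have fg: "f (g i) = c i" if "i \<in> {1..card B}" for i
      using the_inv_into_f_f[OF inj that] by (simp add: f_def)
    have "(\<Sum>b\<in>B. (\<lambda>k. f b * b k)) = (\<Sum>i\<in>{1..card B}. (\<lambda>k. f (g i) * g i k))"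
      using sum.reindex[OF inj, of "\<lambda>b. (\<lambda>k. f b * b k)"] g by (simp add: bij_betw_def o_def)
    also have "\<dots> = (\<Sum>i\<in>{1..card B}. (\<lambda>k. c i * (p i k - p 0 k)))"
      by (rule sum.cong) (auto simp: fg p_def)
    also have "\<dots> = 0"
    proof
      fix k show "(\<Sum>i\<in>{1..card B}. (\<lambda>k. c i * (p i k - p 0 k))) k = 0 k"
      proof (cases "k \<in> T")
        case False
        then have "\<forall>i\<in>{1..card B}. g i k = 0" using vB gB by blast
        then show ?thesis by (simp add: sum_fun_apply p_def)
      qed (use h in \<open>simp add: sum_fun_apply p_def\<close>)
    qed
    finally have "\<forall>b\<in>B. f b = 0"
      using iB fB unfolding real_fun.independent_explicit_finite_subsets by blast
    then show "\<forall>i\<in>{1..card B}. c i = 0"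
      using gB fg by metis
  qed
  moreover have "\<forall>i\<le>card B. p i \<in> Q"
    using z0 zb gB by (auto simp: p_def)
  ultimately show ?thesis by (intro affdim_on_ge[OF fT])
qed

lemma span_pullback:
  assumes "z \<in> real_fun.span B"
  shows "(\<lambda>k. if P k then z (g k) else 0) \<in> real_fun.span ((\<lambda>f k. if P k then f (g k) else 0) ` B)"
proof -
  obtain t r where t: "finite t" "t \<subseteq> B" and z: "z = (\<Sum>a\<in>t. (\<lambda>k. r a * a k))"
    using assms unfolding real_fun.span_explicit by blast
  have "(\<lambda>k. if P k then z (g k) else 0) = (\<Sum>a\<in>t. (\<lambda>k. r a * (\<lambda>f k. if P k then f (g k) else 0) a k))"
    unfolding z by (auto simp: fun_eq_iff sum_fun_apply)
  also have "\<dots> \<in> real_fun.span ((\<lambda>f k. if P k then f (g k) else 0) ` B)"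
    using t by (intro real_fun.span_sum real_fun.span_scale real_fun.span_base) auto
  finally show ?thesis .
qed

section \<open>Generic perturbation of an affinely independent family\<close>

definition lin_on :: "'a set \<Rightarrow> ('a \<Rightarrow> real) \<Rightarrow> ('a \<Rightarrow> real) \<Rightarrow> real" where
  "lin_on T c u = (\<Sum>k\<in>T. c k * u k)"

lemma lin_on_basis_fun_diff:
  assumes "finite T" "k1 \<in> T" "k2 \<in> T"
  shows "lin_on T (\<lambda>k. basis_fun k1 k - basis_fun k2 k) u = u k1 - u k2"
  using sum_basis_fun_mult[OF assms(1,2), of u] sum_basis_fun_mult[OF assms(1,3), of u]
  by (simp add: lin_on_def left_diff_distrib sum_subtractf)

lemma lin_on_segment:
  "lin_on T c (\<lambda>k. u k + s * (w k - u k)) = lin_on T c u + s * (lin_on T c w - lin_on T c u)"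
  by (simp add: lin_on_def algebra_simps sum.distrib sum_subtractf sum_distrib_left)

definition arrangement_cell ::
  "'a set \<Rightarrow> (('a \<Rightarrow> real) \<times> real) set \<Rightarrow> ('a \<Rightarrow> real) \<Rightarrow> ('a \<Rightarrow> real) set" where
  "arrangement_cell T F x =
     {u. (\<forall>k. k \<notin> T \<longrightarrow> u k = 0) \<and> (\<forall>(c, b)\<in>F. lin_on T c x \<le> b \<longrightarrow> lin_on T c u \<le> b)}"

lemma polyhedron_on_arrangement_cell:
  assumes "finite F"
  shows "polyhedron_on T (arrangement_cell T F x)"
  unfolding polyhedron_on_def arrangement_cell_def
  by (rule exI[of _ "Set.filter (\<lambda>(c, b). lin_on T c x \<le> b) F"]) (use assms in \<open>auto simp: lin_on_def\<close>)

lemma polyhedron_on_vanishes: "polyhedron_on T P \<Longrightarrow> u \<in> P \<Longrightarrow> k \<notin> T \<Longrightarrow> u k = 0"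
  unfolding polyhedron_on_def by auto

lemma polyhedron_on_convex_comb:
  assumes P: "polyhedron_on T P" and p: "\<forall>l\<le>d. p l \<in> P"
    and mu: "\<forall>l\<le>d. 0 \<le> mu l" "(\<Sum>l\<le>d. mu l) = 1"
  shows "(\<lambda>k. \<Sum>l\<le>d. mu l * p l k) \<in> P"
proof -
  obtain C where C: "P = {u. (\<forall>k. k \<notin> T \<longrightarrow> u k = 0) \<and> (\<forall>(c, b)\<in>C. (\<Sum>k\<in>T. c k * u k) \<le> b)}"
    using P unfolding polyhedron_on_def by blast
  have "(\<Sum>k\<in>T. c k * (\<Sum>l\<le>d. mu l * p l k)) \<le> b" if cb: "(c, b) \<in> C" for c b
  proof -
    have "(\<Sum>k\<in>T. c k * (\<Sum>l\<le>d. mu l * p l k)) = (\<Sum>l\<le>d. mu l * (\<Sum>k\<in>T. c k * p l k))"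
      by (simp add: sum_distrib_left sum.swap[of _ T] algebra_simps)
    also have "\<dots> \<le> (\<Sum>l\<le>d. mu l * b)"
      using p mu cb unfolding C by (intro sum_mono mult_left_mono) auto
    also have "\<dots> = b" using mu by (simp add: sum_distrib_right[symmetric])
    finally show ?thesis .
  qed
  moreover have "(\<Sum>l\<le>d. mu l * p l k) = 0" if "k \<notin> T" for k
    using p that unfolding C by simp
  ultimately show ?thesis unfolding C by blast
qed

lemma polyhedron_on_segment:
  assumes P: "polyhedron_on T P" and "u \<in> P" "w \<in> P" "0 \<le> s" "s \<le> 1"
  shows "(\<lambda>k. u k + s * (w k - u k)) \<in> P"
proof -
  have D: "{..1::nat} = {0, 1}" by auto
  have "(\<lambda>k. \<Sum>l::nat\<le>1. (if l = 0 then 1 - s else s) * (if l = 0 then u else w) k) \<in> P"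
    by (rule polyhedron_on_convex_comb[OF P]) (use assms in \<open>auto simp: D\<close>)
  then show ?thesis by (simp add: D algebra_simps)
qed

lemma aff_indep_on_shrink:
  assumes ai: "aff_indep_on T p d" and s: "s \<noteq> 0"
  shows "aff_indep_on T (\<lambda>i k. x k + s * (p i k - x k)) d"
  unfolding aff_indep_on_def
proof (intro allI impI)
  fix c assume h: "\<forall>k\<in>T. (\<Sum>i\<in>{1..d}. c i * ((x k + s * (p i k - x k)) - (x k + s * (p 0 k - x k)))) = 0"
  have "\<forall>k\<in>T. (\<Sum>i\<in>{1..d}. (s * c i) * (p i k - p 0 k)) = 0"
    using h by (simp add: algebra_simps)
  with ai[unfolded aff_indep_on_def, rule_format, of "\<lambda>i. s * c i"]
  have "\<forall>i\<in>{1..d}. s * c i = 0" by (simp add: mult.assoc)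
  with s show "\<forall>i\<in>{1..d}. c i = 0" by simp
qed

definition moment_comb :: "(nat \<Rightarrow> 'a \<Rightarrow> real) \<Rightarrow> nat \<Rightarrow> real \<Rightarrow> 'a \<Rightarrow> real" where
  "moment_comb p d e = (\<lambda>k. p 0 k + (\<Sum>i\<in>{1..d}. e ^ i * (p i k - p 0 k)))"

lemma polyhedron_on_moment_comb:
  assumes P: "polyhedron_on T P" and p: "\<forall>l\<le>d. p l \<in> P"
    and e: "0 \<le> e" "(\<Sum>i\<in>{1..d}. e ^ i) \<le> 1"
  shows "moment_comb p d e \<in> P"
proof -
  define mu where "mu l = (if l = 0 then 1 - (\<Sum>i\<in>{1..d}. e ^ i) else e ^ l)" for l :: nat
  have D: "{..d} = insert 0 {1..d}" by auto
  have mu_pos: "(\<Sum>l\<in>{1..d}. mu l * f l) = (\<Sum>l\<in>{1..d}. e ^ l * f l)" for f :: "nat \<Rightarrow> real"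
    by (rule sum.cong) (auto simp: mu_def)
  have "(\<lambda>k. \<Sum>l\<le>d. mu l * p l k) \<in> P"
    by (rule polyhedron_on_convex_comb[OF P p]) (use e mu_pos[of "\<lambda>_. 1"] in \<open>auto simp: mu_def D\<close>)
  moreover have "(\<lambda>k. \<Sum>l\<le>d. mu l * p l k) = moment_comb p d e"
    by (simp add: fun_eq_iff D mu_pos moment_comb_def mu_def algebra_simps
        sum_subtractf sum_distrib_right sum_distrib_left)
  ultimately show ?thesis by simp
qed

lemma lin_on_moment_comb:
  "lin_on T c (moment_comb p d e) - b =
     (\<Sum>i\<le>d. (if i = 0 then lin_on T c (p 0) - b else lin_on T c (p i) - lin_on T c (p 0)) * e ^ i)"
proof -
  have "{..d} = insert 0 {1..d}" by auto
  moreover have "(\<Sum>i\<in>{1..d}. (if i = 0 then lin_on T c (p 0) - b else lin_on T c (p i) - lin_on T c (p 0)) * e ^ i)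
      = (\<Sum>i\<in>{1..d}. e ^ i * (lin_on T c (p i) - lin_on T c (p 0)))"
    by (rule sum.cong) auto
  ultimately show ?thesis
    by (simp add: lin_on_def moment_comb_def algebra_simps sum.distrib sum_subtractf
        sum_distrib_left sum.swap[of _ T])
qed

lemma eventually_poly_nonzero_at_right:
  fixes cf :: "nat \<Rightarrow> real"
  assumes "\<exists>i\<le>d. cf i \<noteq> 0"
  shows "eventually (\<lambda>x. (\<Sum>i\<le>d. cf i * x ^ i) \<noteq> 0) (at_right 0)"
proof -
  define pol where "pol = (\<Sum>i\<le>d. monom (cf i) i)"
  have "pol \<noteq> 0"
  proof
    assume "pol = 0"
    then have "\<forall>i\<le>d. cf i = 0" using coeff_sum_monom[of _ d cf] unfolding pol_def by (metis coeff_0)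
    with assms show False by blast
  qed
  then have fin: "finite {x. poly pol x = 0}" by (rule poly_roots_finite)
  have "eventually (\<lambda>x. \<forall>z\<in>{x. poly pol x = 0}. x \<noteq> z) (at_right 0)"
    by (rule eventually_ball_finite[OF fin]) (simp add: eventually_neq_at_within)
  then show ?thesis by eventually_elim (auto simp: pol_def poly_sum poly_monom)
qed

lemma eventually_moment_comb_generic:
  assumes "finite F"
  shows "eventually (\<lambda>e. \<forall>(c, b)\<in>F. lin_on T c (moment_comb p d e) = b \<longrightarrow> (\<forall>l\<le>d. lin_on T c (p l) = b))
           (at_right 0)"
proof (rule eventually_ball_finite[OF assms], safe)
  fix c b
  show "eventually (\<lambda>e. lin_on T c (moment_comb p d e) = b \<longrightarrow> (\<forall>l\<le>d. lin_on T c (p l) = b)) (at_right 0)"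
  proof (cases "\<forall>l\<le>d. lin_on T c (p l) = b")
    case False
    define cf where "cf i = (if i = 0 then lin_on T c (p 0) - b else lin_on T c (p i) - lin_on T c (p 0))" for i
    have "\<exists>i\<le>d. cf i \<noteq> 0"
    proof (rule ccontr)
      assume "\<not> (\<exists>i\<le>d. cf i \<noteq> 0)"
      then have "cf 0 = 0" "\<forall>l\<le>d. cf l = 0" by auto
      then have "lin_on T c (p l) = b" if "l \<le> d" for l
        using that by (cases "l = 0") (auto simp: cf_def)
      with False show False by blast
    qed
    have eq: "(\<Sum>i\<le>d. cf i * e ^ i) = lin_on T c (moment_comb p d e) - b" for e
      by (simp add: lin_on_moment_comb cf_def)
    from eventually_poly_nonzero_at_right[OF \<open>\<exists>i\<le>d. cf i \<noteq> 0\<close>] show ?thesis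
      by eventually_elim (simp add: eq)
  qed simp
qed

lemma eventually_segment_strict:
  fixes d :: nat
  assumes x: "lin_on T c x < b"
  shows "eventually (\<lambda>s. \<forall>i\<le>d. lin_on T c (\<lambda>k. x k + s * (p i k - x k)) < b) (at_right 0)"
proof -
  have "\<forall>i\<in>{..d}. eventually (\<lambda>s. lin_on T c (\<lambda>k. x k + s * (p i k - x k)) < b) (at_right 0)"
  proof
    fix i
    have "((\<lambda>s. lin_on T c x + s * (lin_on T c (p i) - lin_on T c x))
           \<longlongrightarrow> lin_on T c x + 0 * (lin_on T c (p i) - lin_on T c x)) (at_right 0)"
      by (intro tendsto_intros)
    from order_tendstoD(2)[OF this] x
    show "eventually (\<lambda>s. lin_on T c (\<lambda>k. x k + s * (p i k - x k)) < b) (at_right 0)"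
      by (simp add: lin_on_segment)
  qed
  then have "eventually (\<lambda>s. \<forall>i\<in>{..d}. lin_on T c (\<lambda>k. x k + s * (p i k - x k)) < b) (at_right 0)"
    by (intro eventually_ball_finite) auto
  then show ?thesis by eventually_elim auto
qed

lemma exists_generic_moment_comb:
  fixes d :: nat
  assumes F: "finite F"
  obtains e where "0 < e" "(\<Sum>i\<in>{1..d}. e ^ i) < 1"
    "\<forall>(c, b)\<in>F. lin_on T c (moment_comb p d e) = b \<longrightarrow> (\<forall>l\<le>d. lin_on T c (p l) = b)"
proof -
  have "((\<lambda>e. \<Sum>i\<in>{1..d}. e ^ i) \<longlongrightarrow> (\<Sum>i\<in>{1..d}. (0::real) ^ i)) (at_right 0)"
    by (intro tendsto_intros)
  moreover have "(\<Sum>i\<in>{1..d}. (0::real) ^ i) = 0" by (intro sum.neutral) auto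
  ultimately have small: "eventually (\<lambda>e. (\<Sum>i\<in>{1..d}. e ^ i) < 1) (at_right (0::real))"
    using order_tendstoD(2) by force
  have "eventually (\<lambda>e. 0 < e \<and> (\<Sum>i\<in>{1..d}. e ^ i) < 1 \<and>
      (\<forall>(c, b)\<in>F. lin_on T c (moment_comb p d e) = b \<longrightarrow> (\<forall>l\<le>d. lin_on T c (p l) = b))) (at_right 0)"
    using eventually_at_right_less small eventually_moment_comb_generic[OF F, of T p d]
    by eventually_elim blast
  then show ?thesis using that eventually_happens'[OF trivial_limit_at_right_real] by blast
qed

lemma exists_segment_preserving_strict:
  fixes d :: nat
  assumes F: "finite F"
  obtains s where "0 < s" "s < 1"
    "\<forall>(c, b)\<in>F. lin_on T c x < b \<longrightarrow> (\<forall>i\<le>d. lin_on T c (\<lambda>k. x k + s * (p i k - x k)) < b)"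
proof -
  have below_one: "eventually (\<lambda>s. s < 1) (at_right (0::real))"
    unfolding eventually_at_right_field by (intro exI[of _ 1]) auto
  have "eventually (\<lambda>s. \<forall>(c, b)\<in>F. lin_on T c x < b \<longrightarrow>
         (\<forall>i\<le>d. lin_on T c (\<lambda>k. x k + s * (p i k - x k)) < b)) (at_right 0)"
    by (intro eventually_ball_finite[OF F]) (auto intro: eventually_segment_strict)
  with eventually_at_right_less below_one
  have "eventually (\<lambda>s. 0 < s \<and> s < 1 \<and> (\<forall>(c, b)\<in>F. lin_on T c x < b \<longrightarrow>
         (\<forall>i\<le>d. lin_on T c (\<lambda>k. x k + s * (p i k - x k)) < b))) (at_right (0::real))"
    by eventually_elim blast
  then show ?thesis using that eventually_happens'[OF trivial_limit_at_right_real] by blast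
qed

lemma generic_family_in_cell:
  assumes P: "polyhedron_on T P" and p: "\<forall>l\<le>d. p l \<in> P" and ai: "aff_indep_on T p d"
    and F: "finite F"
  obtains x y where "x \<in> P" "\<forall>i\<le>d. y i \<in> P" "aff_indep_on T y d"
    "\<forall>i\<le>d. y i \<in> arrangement_cell T F x"
proof -
  obtain e where e: "0 < e" "(\<Sum>i\<in>{1..d}. e ^ i) < 1"
    and generic: "\<forall>(c, b)\<in>F. lin_on T c (moment_comb p d e) = b \<longrightarrow> (\<forall>l\<le>d. lin_on T c (p l) = b)"
    using exists_generic_moment_comb[OF F] by blast
  define x where "x = moment_comb p d e"
  obtain s where s: "0 < s" "s < 1"
    and strict: "\<forall>(c, b)\<in>F. lin_on T c x < b \<longrightarrow> (\<forall>i\<le>d. lin_on T c (\<lambda>k. x k + s * (p i k - x k)) < b)"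
    using exists_segment_preserving_strict[OF F] by blast
  define y where "y i = (\<lambda>k. x k + s * (p i k - x k))" for i
  have xP: "x \<in> P" unfolding x_def by (rule polyhedron_on_moment_comb[OF P p]) (use e in auto)
  have yP: "\<forall>i\<le>d. y i \<in> P"
    unfolding y_def using polyhedron_on_segment[OF P xP] p s by auto
  have "y i \<in> arrangement_cell T F x" if i: "i \<le> d" for i
  proof -
    have "y i k = 0" if "k \<notin> T" for k
      using polyhedron_on_vanishes[OF P] yP i that by blast
    moreover have "lin_on T c (y i) \<le> b" if cb: "(c, b) \<in> F" and le: "lin_on T c x \<le> b" for c b
    proof (cases "lin_on T c x = b")
      case True
      with generic cb have "lin_on T c (p i) = b" using i unfolding x_def by blast
      with True show ?thesis by (simp add: y_def lin_on_segment)
    next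
      case False
      with le have "lin_on T c x < b" by simp
      with strict cb i show ?thesis by (fastforce simp: y_def)
    qed
    ultimately show ?thesis unfolding arrangement_cell_def by blast
  qed
  moreover have "aff_indep_on T y d"
    unfolding y_def by (rule aff_indep_on_shrink[OF ai]) (use s in auto)
  ultimately show ?thesis using that xP yP by blast
qed

section \<open>Grids and subgrids\<close>

lemma grid_eq_image:
  "grid n N = (\<lambda>f i. if i < n then f i else 0) ` (PiE {..<n} (\<lambda>_. {0..<int N}))"
proof (intro set_eqI iffI)
  fix k assume k: "k \<in> grid n N"
  have "k = (\<lambda>i. if i < n then restrict k {..<n} i else 0)"
    using k by (auto simp: grid_def fun_eq_iff)
  moreover have "restrict k {..<n} \<in> PiE {..<n} (\<lambda>_. {0..<int N})"
    using k by (auto simp: grid_def)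
  ultimately show "k \<in> (\<lambda>f i. if i < n then f i else 0) ` (PiE {..<n} (\<lambda>_. {0..<int N}))"
    by blast
qed (auto simp: grid_def PiE_def Pi_def)

lemma finite_grid: "finite (grid n N)"
  unfolding grid_eq_image by (intro finite_imageI finite_PiE) auto

lemma card_grid: "card (grid n N) = N ^ n"
proof -
  have "inj_on (\<lambda>f i. if i < n then f i else (0::int)) (PiE {..<n} (\<lambda>_. {0..<int N}))"
    by (rule inj_onI) (auto simp: fun_eq_iff PiE_def extensional_def split: if_splits, metis)
  then have "card (grid n N) = card (PiE {..<n} (\<lambda>_. {0..<int N}))"
    unfolding grid_eq_image by (rule card_image)
  also have "\<dots> = N ^ n" by (simp add: card_PiE)
  finally show ?thesis .
qed

lemma grid_mono: "K \<le> N \<Longrightarrow> grid n K \<subseteq> grid n N"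
  by (auto simp: grid_def)

lemma grid_one: "grid n (Suc 0) = {\<lambda>_. 0}"
proof (intro set_eqI iffI)
  fix x assume x: "x \<in> grid n (Suc 0)"
  have "x i = 0" for i using x by (cases "i < n") (auto simp: grid_def)
  then show "x \<in> {\<lambda>_. 0}" by auto
qed (auto simp: grid_def)

lemma subgrid_one [simp]: "subgrid n v (Suc 0) = {v}"
  unfolding subgrid_def grid_one by auto

lemma subgrid_memD:
  assumes "k \<in> subgrid n v q"
  shows "(\<lambda>i. k i - v i) \<in> grid n q"
  using assms by (auto simp: subgrid_def)

lemma subgrid_memI: "\<kappa> \<in> grid n q \<Longrightarrow> (\<lambda>i. v i + \<kappa> i) \<in> subgrid n v q"
  by (auto simp: subgrid_def)

definition restrict_subgrid ::
  "nat \<Rightarrow> (nat \<Rightarrow> int) \<Rightarrow> nat \<Rightarrow> ((nat \<Rightarrow> int) \<Rightarrow> real) \<Rightarrow> (nat \<Rightarrow> int) \<Rightarrow> real" where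
  "restrict_subgrid n v q u = (\<lambda>k. if k \<in> grid n q then u (\<lambda>i. v i + k i) else 0)"

definition extend_subgrid ::
  "nat \<Rightarrow> (nat \<Rightarrow> int) \<Rightarrow> nat \<Rightarrow> ((nat \<Rightarrow> int) \<Rightarrow> real) \<Rightarrow> (nat \<Rightarrow> int) \<Rightarrow> real" where
  "extend_subgrid n v q z = (\<lambda>k. if k \<in> subgrid n v q then z (\<lambda>i. k i - v i) else 0)"

lemma sum_extend_restrict_subgrid:
  fixes R :: nat
  assumes disj: "\<forall>r<R. \<forall>r'<R. r \<noteq> r' \<longrightarrow> subgrid n (v r) (q r) \<inter> subgrid n (v r') (q r') = {}"
    and cov: "(\<Union>r<R. subgrid n (v r) (q r)) = grid n N"
    and z: "\<forall>k. k \<notin> grid n N \<longrightarrow> z k = 0"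
  shows "z = (\<Sum>r<R. extend_subgrid n (v r) (q r) (restrict_subgrid n (v r) (q r) z))"
proof
  fix k
  show "z k = (\<Sum>r<R. extend_subgrid n (v r) (q r) (restrict_subgrid n (v r) (q r) z)) k"
  proof (cases "k \<in> grid n N")
    case True
    then obtain r0 where r0: "r0 < R" "k \<in> subgrid n (v r0) (q r0)" using cov by auto
    have "(\<Sum>r<R. extend_subgrid n (v r) (q r) (restrict_subgrid n (v r) (q r) z)) k
        = (\<Sum>r<R. if r = r0 then z k else 0)"
      unfolding sum_fun_apply
    proof (rule sum.cong)
      fix r assume "r \<in> {..<R}"
      then show "extend_subgrid n (v r) (q r) (restrict_subgrid n (v r) (q r) z) k = (if r = r0 then z k else 0)"
        using disj r0 subgrid_memD[OF r0(2)]
        by (auto simp: extend_subgrid_def restrict_subgrid_def)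
    qed simp
    also have "\<dots> = z k" using r0 by simp
    finally show ?thesis by simp
  next
    case False
    then show ?thesis using z cov by (auto simp: sum_fun_apply extend_subgrid_def)
  qed
qed

lemma card_independent_restrict_le_affdim:
  assumes sub: "subgrid n v q \<subseteq> grid n N"
    and yQ: "\<forall>i\<le>d. restrict_subgrid n v q (y i) \<in> Q"
    and B: "B \<subseteq> restrict_subgrid n v q ` diff_on (grid n N) y ` {1..d}" "real_fun.independent B"
  shows "int (card B) \<le> affdim_on (grid n q) Q"
proof (rule affdim_on_ge_card_independent[OF finite_grid _ _ B(2)])
  show "finite B" using B(1) by (rule finite_subset) simp
  show "restrict_subgrid n v q (y 0) \<in> Q" using yQ by simp
  have "(\<lambda>k. restrict_subgrid n v q (y 0) k + restrict_subgrid n v q (diff_on (grid n N) y i) k)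
      = restrict_subgrid n v q (y i)" for i
    using sub subgrid_memI[of _ n q v] by (auto simp: fun_eq_iff restrict_subgrid_def diff_on_def)
  then show "\<forall>b\<in>B. (\<lambda>k. restrict_subgrid n v q (y 0) k + b k) \<in> Q"
    using B(1) yQ by auto
  show "\<forall>b\<in>B. \<forall>k. k \<notin> grid n q \<longrightarrow> b k = 0"
    using B(1) by (auto simp: restrict_subgrid_def)
qed

lemma subset_span_extend_restrict:
  fixes R :: nat
  assumes disj: "\<forall>r<R. \<forall>r'<R. r \<noteq> r' \<longrightarrow> subgrid n (v r) (q r) \<inter> subgrid n (v r') (q r') = {}"
    and cov: "(\<Union>r<R. subgrid n (v r) (q r)) = grid n N"
    and W: "\<forall>z\<in>W. \<forall>k. k \<notin> grid n N \<longrightarrow> z k = 0"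
    and B: "\<And>r. restrict_subgrid n (v r) (q r) ` W \<subseteq> real_fun.span (B r)"
  shows "W \<subseteq> real_fun.span (\<Union>r<R. extend_subgrid n (v r) (q r) ` B r)"
proof
  fix z assume z: "z \<in> W"
  let ?S = "real_fun.span (\<Union>r<R. extend_subgrid n (v r) (q r) ` B r)"
  have "extend_subgrid n (v r) (q r) (restrict_subgrid n (v r) (q r) z) \<in> ?S" if r: "r < R" for r
  proof -
    have "extend_subgrid n (v r) (q r) (restrict_subgrid n (v r) (q r) z)
        \<in> real_fun.span (extend_subgrid n (v r) (q r) ` B r)"
      using span_pullback[of "restrict_subgrid n (v r) (q r) z" "B r"
          "\<lambda>k. k \<in> subgrid n (v r) (q r)" "\<lambda>k i. k i - v r i"] B z
      unfolding extend_subgrid_def by blast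
    also have "\<dots> \<subseteq> ?S" by (rule real_fun.span_mono) (use r in auto)
    finally show ?thesis .
  qed
  then have "(\<Sum>r<R. extend_subgrid n (v r) (q r) (restrict_subgrid n (v r) (q r) z)) \<in> ?S"
    by (intro real_fun.span_sum) auto
  moreover have "z = (\<Sum>r<R. extend_subgrid n (v r) (q r) (restrict_subgrid n (v r) (q r) z))"
    using W z by (intro sum_extend_restrict_subgrid[OF disj cov]) simp
  ultimately show "z \<in> ?S" by simp
qed

lemma aff_indep_on_le_sum_affdim:
  fixes R :: nat
  assumes disj: "\<forall>r<R. \<forall>r'<R. r \<noteq> r' \<longrightarrow> subgrid n (v r) (q r) \<inter> subgrid n (v r') (q r') = {}"
    and cov: "(\<Union>r<R. subgrid n (v r) (q r)) = grid n N"
    and ai: "aff_indep_on (grid n N) y d"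
    and yQ: "\<forall>r<R. \<forall>i\<le>d. restrict_subgrid n (v r) (q r) (y i) \<in> Q r"
  shows "int d \<le> (\<Sum>r<R. affdim_on (grid n (q r)) (Q r))"
proof -
  define W where "W = diff_on (grid n N) y ` {1..d}"
  define res where "res r = restrict_subgrid n (v r) (q r)" for r
  note diff = aff_indep_on_diff_on[OF ai, folded W_def]
  have "\<forall>r. \<exists>B. B \<subseteq> res r ` W \<and> real_fun.independent B \<and> res r ` W \<subseteq> real_fun.span B"
  proof
    fix r
    obtain B where "B \<subseteq> res r ` W" "real_fun.independent B" "res r ` W \<subseteq> real_fun.span B"
      by (rule real_fun.maximal_independent_subset)
    then show "\<exists>B. B \<subseteq> res r ` W \<and> real_fun.independent B \<and> res r ` W \<subseteq> real_fun.span B" by blast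
  qed
  then obtain B where "\<forall>r. B r \<subseteq> res r ` W \<and> real_fun.independent (B r) \<and> res r ` W \<subseteq> real_fun.span (B r)"
    by (rule choice[THEN exE])
  then have B: "\<And>r. B r \<subseteq> res r ` W" "\<And>r. real_fun.independent (B r)"
    "\<And>r. res r ` W \<subseteq> real_fun.span (B r)" by simp_all
  have finB: "finite (B r)" for r
    using B(1) by (rule finite_subset) (simp add: W_def)
  have "W \<subseteq> real_fun.span (\<Union>r<R. extend_subgrid n (v r) (q r) ` B r)"
    by (rule subset_span_extend_restrict[OF disj cov _ B(3)[unfolded res_def]])
      (auto simp: W_def diff_on_def)
  then have "card W \<le> card (\<Union>r<R. extend_subgrid n (v r) (q r) ` B r)"
    using real_fun.independent_span_bound[OF _ diff(2)] finB by simp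
  also have "\<dots> \<le> (\<Sum>r<R. card (B r))"
    by (rule order_trans[OF card_UN_le sum_mono]) (auto intro: card_image_le finB)
  finally have "int d \<le> (\<Sum>r<R. int (card (B r)))"
    using card_image[OF diff(1)] unfolding W_def by (simp flip: of_nat_sum)
  also have "\<dots> \<le> (\<Sum>r<R. affdim_on (grid n (q r)) (Q r))"
  proof (rule sum_mono)
    fix r assume "r \<in> {..<R}"
    then have "subgrid n (v r) (q r) \<subseteq> grid n N" "\<forall>i\<le>d. restrict_subgrid n (v r) (q r) (y i) \<in> Q r"
      using cov yQ by auto
    from card_independent_restrict_le_affdim[OF this B(1,2)[of r, unfolded res_def W_def]]
    show "int (card (B r)) \<le> affdim_on (grid n (q r)) (Q r)" .
  qed
  finally show ?thesis .
qed

section \<open>Cells of the linearization system\<close>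

lemma finite_admissible_shifts:
  assumes "0 < m"
  shows "finite {s. admissible_shift n m t N s}"
proof (rule finite_subset)
  show "{s. admissible_shift n m t N s} \<subseteq> (\<lambda>k i. if i < n then k i - t 0 i else 0) ` grid n N"
  proof
    fix s assume s: "s \<in> {s. admissible_shift n m t N s}"
    then have "shifted n t 0 s \<in> grid n N" using assms by (auto simp: admissible_shift_def)
    moreover have "s = (\<lambda>i. if i < n then shifted n t 0 s i - t 0 i else 0)"
      using s by (auto simp: admissible_shift_def shifted_def fun_eq_iff)
    ultimately show "s \<in> (\<lambda>k i. if i < n then k i - t 0 i else 0) ` grid n N" by blast
  qed
qed (simp add: finite_grid)

lemma admissible_shift_translate:
  assumes v0: "\<forall>i\<ge>n. v i = 0" and sub: "subgrid n v q \<subseteq> grid n N"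
    and adm: "admissible_shift n m t q \<sigma>"
  shows "admissible_shift n m t N (\<lambda>i. \<sigma> i + v i)"
    and "shifted n t j (\<lambda>i. \<sigma> i + v i) = (\<lambda>i. v i + shifted n t j \<sigma> i)"
proof -
  show sh: "shifted n t j (\<lambda>i. \<sigma> i + v i) = (\<lambda>i. v i + shifted n t j \<sigma> i)" for j
    using v0 by (auto simp: shifted_def fun_eq_iff)
  show "admissible_shift n m t N (\<lambda>i. \<sigma> i + v i)"
    using adm v0 sub subgrid_memI unfolding admissible_shift_def sh by fastforce
qed

lemma restrict_subgrid_shifted:
  assumes "\<forall>i\<ge>n. v i = 0" "subgrid n v q \<subseteq> grid n N" "admissible_shift n m t q \<sigma>" "j < m"
  shows "restrict_subgrid n v q u (shifted n t j \<sigma>) = u (shifted n t j (\<lambda>i. \<sigma> i + v i))"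
  using assms admissible_shift_translate(2)[OF assms(1-3)]
  by (simp add: restrict_subgrid_def admissible_shift_def)

definition lin_forms ::
  "nat \<Rightarrow> nat \<Rightarrow> (nat \<Rightarrow> real) \<Rightarrow> (nat \<Rightarrow> nat \<Rightarrow> int) \<Rightarrow> nat \<Rightarrow> (((nat \<Rightarrow> int) \<Rightarrow> real) \<times> real) set" where
  "lin_forms n m a t N =
     (\<lambda>(s, j1, j2). (\<lambda>k. basis_fun (shifted n t j1 s) k - basis_fun (shifted n t j2 s) k, a j2 - a j1)) `
       ({s. admissible_shift n m t N s} \<times> {..<m} \<times> {..<m})"

definition tropical_cell ::
  "nat \<Rightarrow> nat \<Rightarrow> (nat \<Rightarrow> real) \<Rightarrow> (nat \<Rightarrow> nat \<Rightarrow> int) \<Rightarrow> nat \<Rightarrow> ((nat \<Rightarrow> int) \<Rightarrow> real) \<Rightarrow> ((nat \<Rightarrow> int) \<Rightarrow> real) set" where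
  "tropical_cell n m a t N x = arrangement_cell (grid n N) (lin_forms n m a t N) x"

lemma finite_lin_forms: "0 < m \<Longrightarrow> finite (lin_forms n m a t N)"
  unfolding lin_forms_def by (intro finite_imageI finite_cartesian_product finite_admissible_shifts) auto

lemma mem_tropical_cell_iff:
  "u \<in> tropical_cell n m a t N x \<longleftrightarrow> (\<forall>k. k \<notin> grid n N \<longrightarrow> u k = 0) \<and>
     (\<forall>s j1 j2. admissible_shift n m t N s \<and> j1 < m \<and> j2 < m \<and>
        a j1 + x (shifted n t j1 s) \<le> a j2 + x (shifted n t j2 s) \<longrightarrow>
        a j1 + u (shifted n t j1 s) \<le> a j2 + u (shifted n t j2 s))"
proof -
  have eq: "lin_on (grid n N) (\<lambda>k. basis_fun (shifted n t j1 s) k - basis_fun (shifted n t j2 s) k) w \<le> a j2 - a j1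
      \<longleftrightarrow> a j1 + w (shifted n t j1 s) \<le> a j2 + w (shifted n t j2 s)"
    if "admissible_shift n m t N s" "j1 < m" "j2 < m" for s j1 j2 w
    using that lin_on_basis_fun_diff[OF finite_grid, of "shifted n t j1 s" n N "shifted n t j2 s" w]
    by (auto simp: admissible_shift_def)
  show ?thesis
    unfolding tropical_cell_def arrangement_cell_def lin_forms_def
    by (simp add: Ball_image_comp split_paired_Ball_Sigma eq cong: conj_cong) blast
qed

lemma tropical_cell_subset_U_set:
  assumes "x \<in> U_set n m a t N"
  shows "tropical_cell n m a t N x \<subseteq> U_set n m a t N"
proof
  fix u assume u: "u \<in> tropical_cell n m a t N x"
  have "sat_linearization n m a t s u" if s: "admissible_shift n m t N s" for s
  proof -
    obtain j1 j2 where j: "j1 < m" "j2 < m" "j1 \<noteq> j2"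
      "a j1 + x (shifted n t j1 s) = a j2 + x (shifted n t j2 s)"
      "\<forall>j<m. a j1 + x (shifted n t j1 s) \<le> a j + x (shifted n t j s)"
      using assms s unfolding U_set_def sat_linearization_def by blast
    have preserved: "a j + u (shifted n t j s) \<le> a j' + u (shifted n t j' s)"
      if "j < m" "j' < m" "a j + x (shifted n t j s) \<le> a j' + x (shifted n t j' s)" for j j'
      using u s that unfolding mem_tropical_cell_iff by blast
    have "\<forall>j<m. a j1 + u (shifted n t j1 s) \<le> a j + u (shifted n t j s)"
      using j(1,5) preserved by blast
    moreover have "a j1 + u (shifted n t j1 s) = a j2 + u (shifted n t j2 s)"
      using preserved[OF j(1,2)] preserved[OF j(2,1)] j(4) by (simp add: order_antisym)
    ultimately show ?thesis using j(1-3) unfolding sat_linearization_def by blast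
  qed
  with u show "u \<in> U_set n m a t N" by (simp add: U_set_def mem_tropical_cell_iff)
qed

lemma restrict_subgrid_U_set:
  assumes v0: "\<forall>i\<ge>n. v i = 0" and sub: "subgrid n v q \<subseteq> grid n N"
    and x: "x \<in> U_set n m a t N"
  shows "restrict_subgrid n v q x \<in> U_set n m a t q"
proof -
  have "sat_linearization n m a t \<sigma> (restrict_subgrid n v q x)"
    if \<sigma>: "admissible_shift n m t q \<sigma>" for \<sigma>
  proof -
    have "sat_linearization n m a t (\<lambda>i. \<sigma> i + v i) x"
      using x admissible_shift_translate(1)[OF v0 sub \<sigma>] by (simp add: U_set_def)
    then show ?thesis
      unfolding sat_linearization_def
      by (simp add: restrict_subgrid_shifted[OF v0 sub \<sigma>] cong: conj_cong)
  qed
  then show ?thesis by (simp add: U_set_def restrict_subgrid_def)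
qed

lemma restrict_subgrid_tropical_cell:
  assumes v0: "\<forall>i\<ge>n. v i = 0" and sub: "subgrid n v q \<subseteq> grid n N"
    and u: "u \<in> tropical_cell n m a t N x"
  shows "restrict_subgrid n v q u \<in> tropical_cell n m a t q (restrict_subgrid n v q x)"
  unfolding mem_tropical_cell_iff
proof (intro conjI allI impI)
  fix k assume "k \<notin> grid n q" then show "restrict_subgrid n v q u k = 0"
    by (simp add: restrict_subgrid_def)
next
  fix \<sigma> j1 j2
  assume h: "admissible_shift n m t q \<sigma> \<and> j1 < m \<and> j2 < m \<and>
    a j1 + restrict_subgrid n v q x (shifted n t j1 \<sigma>) \<le> a j2 + restrict_subgrid n v q x (shifted n t j2 \<sigma>)"
  then have \<sigma>: "admissible_shift n m t q \<sigma>" and j: "j1 < m" "j2 < m" by auto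
  note restr = restrict_subgrid_shifted[OF v0 sub \<sigma>]
  show "a j1 + restrict_subgrid n v q u (shifted n t j1 \<sigma>) \<le> a j2 + restrict_subgrid n v q u (shifted n t j2 \<sigma>)"
    using h u admissible_shift_translate(1)[OF v0 sub \<sigma>] j
    by (simp add: mem_tropical_cell_iff restr)
qed

section \<open>Subadditivity of the dimension\<close>

lemma exists_double_min_affine:
  fixes c a :: "nat \<Rightarrow> real"
  assumes "j0' < m" "j1' < m" "c j0' \<noteq> c j1'"
  obtains L j0 j1 where "j0 < m" "j1 < m" "j0 \<noteq> j1" "a j0 - L * c j0 = a j1 - L * c j1"
    "\<forall>j<m. a j0 - L * c j0 \<le> a j - L * c j"
proof -
  define cmin where "cmin = Min (c ` {..<m})"
  have cmin: "\<And>j. j < m \<Longrightarrow> cmin \<le> c j" unfolding cmin_def by auto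
  have "cmin \<in> c ` {..<m}" unfolding cmin_def using assms by (intro Min_in) auto
  define S0 where "S0 = {j. j < m \<and> c j = cmin}"
  have S0: "finite S0" "S0 \<noteq> {}" using \<open>cmin \<in> c ` {..<m}\<close> by (auto simp: S0_def)
  define j0 where "j0 = arg_min_on a S0"
  have j0: "j0 \<in> S0" "\<And>j. j \<in> S0 \<Longrightarrow> a j0 \<le> a j"
    using arg_min_if_finite[OF S0, of a] arg_min_least[OF S0, of _ a] unfolding j0_def by auto
  define S1 where "S1 = {j. j < m \<and> cmin < c j}"
  have S1: "finite S1" "S1 \<noteq> {}"
    using assms cmin by (auto simp: S1_def) (metis le_less)
  define lam where "lam j = (a j - a j0) / (c j - c j0)" for j
  define j1 where "j1 = arg_min_on lam S1"
  have j1: "j1 \<in> S1" "\<And>j. j \<in> S1 \<Longrightarrow> lam j1 \<le> lam j"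
    using arg_min_if_finite[OF S1, of lam] arg_min_least[OF S1, of _ lam] unfolding j1_def by auto
  have cj0: "c j0 = cmin" "j0 < m" using j0 by (auto simp: S0_def)
  have pos1: "c j1 - c j0 > 0" using j1(1) cj0 by (auto simp: S1_def)
  have "a j0 - lam j1 * c j0 \<le> a j - lam j1 * c j" if j: "j < m" for j
  proof (cases "c j = cmin")
    case True
    then show ?thesis using j0 cj0 j by (auto simp: S0_def)
  next
    case False
    then have jS1: "j \<in> S1" and pos: "c j - c j0 > 0"
      using cmin[OF j] j cj0 by (auto simp: S1_def)
    have "lam j1 * (c j - c j0) \<le> a j - a j0"
      using j1(2)[OF jS1] pos by (simp add: lam_def le_divide_eq)
    then show ?thesis by (simp add: algebra_simps)
  qed
  moreover have "a j0 - lam j1 * c j0 = a j1 - lam j1 * c j1"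
    using pos1 by (simp add: lam_def field_simps)
  moreover have "j0 \<noteq> j1" "j1 < m" using pos1 j1(1) by (auto simp: S1_def)
  ultimately show ?thesis using that cj0 by blast
qed

lemma U_set_nonempty:
  assumes m2: "m \<ge> 2"
    and distinct_exps: "\<forall>j<m. \<forall>j'<m. j \<noteq> j' \<longrightarrow> (\<exists>i<n. t j i \<noteq> t j' i)"
  obtains u where "u \<in> U_set n m a t N"
proof -
  have "\<exists>i<n. t 0 i \<noteq> t 1 i" using distinct_exps m2 by simp
  then obtain i0 where i0: "i0 < n" "t 0 i0 \<noteq> t 1 i0" by blast
  define c where "c j = real_of_int (t j i0)" for j
  obtain L j0 j1 where L: "j0 < m" "j1 < m" "j0 \<noteq> j1" "a j0 - L * c j0 = a j1 - L * c j1"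
    "\<forall>j<m. a j0 - L * c j0 \<le> a j - L * c j"
    by (rule exists_double_min_affine[of 0 m 1 c a]) (use m2 i0 in \<open>auto simp: c_def\<close>)
  text \<open>Linear in the coordinate i0, u turns every linearization into the univariate
    minimum over j of a j - L * t j i0, up to an additive constant.\<close>
  define u where "u = (\<lambda>k. if k \<in> grid n N then - L * real_of_int (k i0) else 0)"
  have "sat_linearization n m a t s u" if s: "admissible_shift n m t N s" for s
  proof -
    have "a j + u (shifted n t j s) = (a j - L * c j) - L * real_of_int (s i0)" if j: "j < m" for j
      using s j i0 by (simp add: admissible_shift_def u_def shifted_def c_def algebra_simps)
    then show ?thesis
      unfolding sat_linearization_def using L by (intro exI[of _ j0] exI[of _ j1]) auto
  qed
  then have "u \<in> U_set n m a t N" by (simp add: U_set_def u_def)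
  then show ?thesis by (rule that)
qed

lemma dimU_nonneg:
  assumes "m \<ge> 2" "\<forall>j<m. \<forall>j'<m. j \<noteq> j' \<longrightarrow> (\<exists>i<n. t j i \<noteq> t j' i)"
  shows "0 \<le> dimU n m a t N"
proof -
  obtain u where "u \<in> U_set n m a t N" using U_set_nonempty[OF assms] .
  then show ?thesis
    unfolding dimU_def by (intro pdim_on_nonneg[OF finite_grid]) (auto simp: U_set_def)
qed

lemma affdim_tropical_cell_le_dimU:
  assumes "0 < m" "x \<in> U_set n m a t N"
  shows "affdim_on (grid n N) (tropical_cell n m a t N x) \<le> dimU n m a t N"
  unfolding dimU_def using assms
  by (intro pdim_on_ge finite_grid tropical_cell_subset_U_set)
    (simp_all add: tropical_cell_def polyhedron_on_arrangement_cell finite_lin_forms)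

lemma polyhedron_in_U_set_indep_family:
  assumes m0: "0 < m" and P: "polyhedron_on (grid n N) P" "P \<subseteq> U_set n m a t N" "P \<noteq> {}"
  obtains d x y where "affdim_on (grid n N) P = int d" "x \<in> U_set n m a t N"
    "aff_indep_on (grid n N) y d" "\<forall>i\<le>d. y i \<in> tropical_cell n m a t N x"
proof -
  obtain d p where d: "affdim_on (grid n N) P = int d" and p: "\<forall>i\<le>d. p i \<in> P"
    and ai: "aff_indep_on (grid n N) p d"
    using affdim_on_witness[OF finite_grid P(3)] .
  obtain x y where "x \<in> P" "aff_indep_on (grid n N) y d" "\<forall>i\<le>d. y i \<in> tropical_cell n m a t N x"
    using generic_family_in_cell[OF P(1) p ai finite_lin_forms[OF m0]]
    unfolding tropical_cell_def by metis
  with d P(2) that show ?thesis by blast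
qed

lemma dimU_subadditive:
  fixes R :: nat
  assumes m2: "m \<ge> 2"
    and distinct_exps: "\<forall>j<m. \<forall>j'<m. j \<noteq> j' \<longrightarrow> (\<exists>i<n. t j i \<noteq> t j' i)"
    and v0: "\<forall>r<R. \<forall>i\<ge>n. v r i = 0"
    and disj: "\<forall>r<R. \<forall>r'<R. r \<noteq> r' \<longrightarrow> subgrid n (v r) (q r) \<inter> subgrid n (v r') (q r') = {}"
    and cov: "(\<Union>r<R. subgrid n (v r) (q r)) = grid n N"
  shows "dimU n m a t N \<le> (\<Sum>r<R. dimU n m a t (q r))"
  unfolding dimU_def[of n m a t N]
proof (rule pdim_on_le[OF finite_grid])
  fix P assume P: "polyhedron_on (grid n N) P" "P \<subseteq> U_set n m a t N"
  have m0: "0 < m" using m2 by simp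
  have sub: "subgrid n (v r) (q r) \<subseteq> grid n N" if "r < R" for r
    using cov that by blast
  show "affdim_on (grid n N) P \<le> (\<Sum>r<R. dimU n m a t (q r))"
  proof (cases "P = {}")
    case True
    have "0 \<le> (\<Sum>r<R. dimU n m a t (q r))"
      using dimU_nonneg[OF m2 distinct_exps] by (simp add: sum_nonneg)
    with True show ?thesis by (simp add: affdim_on_def)
  next
    case False
    then obtain d x y where d: "affdim_on (grid n N) P = int d" and x: "x \<in> U_set n m a t N"
      and ai: "aff_indep_on (grid n N) y d" and y: "\<forall>i\<le>d. y i \<in> tropical_cell n m a t N x"
      using polyhedron_in_U_set_indep_family[OF m0 P] by metis
    let ?x = "\<lambda>r. restrict_subgrid n (v r) (q r) x"
    have "int d \<le> (\<Sum>r<R. affdim_on (grid n (q r)) (tropical_cell n m a t (q r) (?x r)))"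
      using v0 sub y
      by (intro aff_indep_on_le_sum_affdim[OF disj cov ai] allI impI restrict_subgrid_tropical_cell) auto
    also have "\<dots> \<le> (\<Sum>r<R. dimU n m a t (q r))"
      using v0 sub x
      by (intro sum_mono affdim_tropical_cell_le_dimU[OF m0] restrict_subgrid_U_set) auto
    finally show ?thesis using d by simp
  qed
qed

lemma dimU_subadditive_tiles:
  assumes m2: "m \<ge> 2"
    and distinct_exps: "\<forall>j<m. \<forall>j'<m. j \<noteq> j' \<longrightarrow> (\<exists>i<n. t j i \<noteq> t j' i)"
    and C: "finite C" "\<forall>(v, q)\<in>C. \<forall>i\<ge>n. v i = 0"
    and disj: "\<forall>c\<in>C. \<forall>c'\<in>C. c \<noteq> c' \<longrightarrow> subgrid n (fst c) (snd c) \<inter> subgrid n (fst c') (snd c') = {}"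
    and cov: "(\<Union>c\<in>C. subgrid n (fst c) (snd c)) = grid n N"
  shows "dimU n m a t N \<le> (\<Sum>c\<in>C. dimU n m a t (snd c))"
proof -
  obtain h where h: "bij_betw h {..<card C} C"
    using ex_bij_betw_nat_finite[OF C(1)] by (auto simp: atLeast0LessThan)
  then have hC: "\<And>r. r < card C \<Longrightarrow> h r \<in> C" and himg: "h ` {..<card C} = C"
    and hinj: "\<And>r r'. r < card C \<Longrightarrow> r' < card C \<Longrightarrow> h r = h r' \<Longrightarrow> r = r'"
    by (auto simp: bij_betw_def inj_on_def)
  have "dimU n m a t N \<le> (\<Sum>r<card C. dimU n m a t (snd (h r)))"
  proof (rule dimU_subadditive[OF m2 distinct_exps])
    show "\<forall>r<card C. \<forall>i\<ge>n. fst (h r) i = 0" using C(2) hC by fastforce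
    show "\<forall>r<card C. \<forall>r'<card C. r \<noteq> r' \<longrightarrow>
        subgrid n (fst (h r)) (snd (h r)) \<inter> subgrid n (fst (h r')) (snd (h r')) = {}"
    proof (intro allI impI)
      fix r r' assume "r < card C" "r' < card C" "r \<noteq> r'"
      with hinj hC have "h r \<noteq> h r'" "h r \<in> C" "h r' \<in> C" by blast+
      with disj show "subgrid n (fst (h r)) (snd (h r)) \<inter> subgrid n (fst (h r')) (snd (h r')) = {}"
        by blast
    qed
    show "(\<Union>r<card C. subgrid n (fst (h r)) (snd (h r))) = grid n N"
    proof -
      have "(\<Union>c\<in>h ` {..<card C}. subgrid n (fst c) (snd c)) = grid n N" using cov himg by simp
      then show ?thesis by simp
    qed
  qed
  also have "\<dots> = (\<Sum>c\<in>C. dimU n m a t (snd c))"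
    using sum.reindex_bij_betw[OF h, of "\<lambda>c. dimU n m a t (snd c)"] by simp
  finally show ?thesis .
qed

section \<open>Tiling by cubes and the limit\<close>

lemma block_in_grid:
  assumes "\<alpha> \<in> grid n k" "\<kappa> \<in> grid n M"
  shows "(\<lambda>i. int M * \<alpha> i + \<kappa> i) \<in> grid n (k * M)"
proof -
  have "int M * \<alpha> i + \<kappa> i < int (k * M)" if "i < n" for i
  proof -
    have "int M * \<alpha> i + \<kappa> i < int M * (\<alpha> i + 1)" using assms that by (simp add: grid_def algebra_simps)
    also have "\<dots> \<le> int M * int k" using assms that by (intro mult_left_mono) (auto simp: grid_def)
    finally show ?thesis by (simp add: mult.commute)
  qed
  then show ?thesis using assms by (auto simp: grid_def)
qed

lemma grid_mult_eq_Union_blocks: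
  assumes M: "1 \<le> M"
  shows "grid n (k * M) = (\<Union>\<alpha>\<in>grid n k. subgrid n (\<lambda>i. int M * \<alpha> i) M)"
proof (intro set_eqI iffI)
  fix p assume p: "p \<in> grid n (k * M)"
  have "p i div int M < int k" if "i < n" for i
  proof -
    have "int M * (p i div int M) \<le> p i"
      using p that M mult_div_mod_eq[of "int M" "p i"] pos_mod_sign[of "int M" "p i"] by linarith
    also have "\<dots> < int M * int k" using p that by (simp add: grid_def mult.commute)
    finally show ?thesis using M by simp
  qed
  then have "(\<lambda>i. p i div int M) \<in> grid n k" "(\<lambda>i. p i mod int M) \<in> grid n M"
    using p M by (auto simp: grid_def pos_imp_zdiv_nonneg_iff)
  moreover have "p = (\<lambda>i. int M * (p i div int M) + p i mod int M)"
    by (simp add: mult_div_mod_eq)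
  ultimately show "p \<in> (\<Union>\<alpha>\<in>grid n k. subgrid n (\<lambda>i. int M * \<alpha> i) M)"
    using subgrid_memI[of "\<lambda>i. p i mod int M" n M "\<lambda>i. int M * (p i div int M)"] by auto
next
  fix p assume "p \<in> (\<Union>\<alpha>\<in>grid n k. subgrid n (\<lambda>i. int M * \<alpha> i) M)"
  then obtain \<alpha> where "\<alpha> \<in> grid n k" "p \<in> subgrid n (\<lambda>i. int M * \<alpha> i) M" by blast
  then show "p \<in> grid n (k * M)"
    using block_in_grid[OF _ subgrid_memD] by fastforce
qed

lemma blocks_disjoint:
  assumes M: "1 \<le> M"
    and "subgrid n (\<lambda>i. int M * \<alpha> i) M \<inter> subgrid n (\<lambda>i. int M * \<alpha>' i) M \<noteq> {}"
  shows "\<alpha> = \<alpha>'"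
proof
  fix i
  have block_div: "p i div int M = \<beta> i" if "p \<in> subgrid n (\<lambda>i. int M * \<beta> i) M" for p \<beta>
  proof -
    have "(\<lambda>i. p i - int M * \<beta> i) \<in> grid n M" using that by (rule subgrid_memD)
    then have "0 \<le> p i - int M * \<beta> i" "p i - int M * \<beta> i < int M"
      using M by (cases "i < n"; auto simp: grid_def)+
    then have "(p i - int M * \<beta> i) div int M = 0" by (rule div_pos_pos_trivial)
    moreover have "p i div int M = \<beta> i + (p i - int M * \<beta> i) div int M"
      using div_mult_self1[of "int M" "p i - int M * \<beta> i" "\<beta> i"] M by (simp add: mult.commute)
    ultimately show ?thesis by simp
  qed
  from assms(2) obtain p where "p \<in> subgrid n (\<lambda>i. int M * \<alpha> i) M" "p \<in> subgrid n (\<lambda>i. int M * \<alpha>' i) M"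
    by blast
  then show "\<alpha> i = \<alpha>' i" using block_div by metis
qed

definition block_tiles :: "nat \<Rightarrow> nat \<Rightarrow> nat \<Rightarrow> ((nat \<Rightarrow> int) \<times> nat) set" where
  "block_tiles n k M = (\<lambda>\<alpha>. ((\<lambda>i. int M * \<alpha> i), M)) ` grid n k"

definition unit_tiles :: "nat \<Rightarrow> nat \<Rightarrow> nat \<Rightarrow> ((nat \<Rightarrow> int) \<times> nat) set" where
  "unit_tiles n N K = (\<lambda>p. (p, 1)) ` (grid n N - grid n K)"

lemma Union_block_tiles:
  "1 \<le> M \<Longrightarrow> (\<Union>c\<in>block_tiles n k M. subgrid n (fst c) (snd c)) = grid n (k * M)"
  unfolding block_tiles_def grid_mult_eq_Union_blocks by simp

lemma Union_unit_tiles: "(\<Union>c\<in>unit_tiles n N K. subgrid n (fst c) (snd c)) = grid n N - grid n K"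
  unfolding unit_tiles_def by auto

lemma block_tiles_unit_tiles_disjoint:
  fixes n k N :: nat
  assumes M: "1 \<le> M"
  defines "C \<equiv> block_tiles n k M \<union> unit_tiles n N (k * M)"
  shows "\<forall>c\<in>C. \<forall>c'\<in>C. c \<noteq> c' \<longrightarrow> subgrid n (fst c) (snd c) \<inter> subgrid n (fst c') (snd c') = {}"
proof (intro ballI impI)
  fix c c' assume c: "c \<in> C" and c': "c' \<in> C" and ne: "c \<noteq> c'"
  have in_block: "subgrid n (fst c) (snd c) \<subseteq> grid n (k * M)" if "c \<in> block_tiles n k M" for c
    using Union_block_tiles[OF M] that by blast
  consider "c \<in> block_tiles n k M" "c' \<in> block_tiles n k M"
    | "c \<in> block_tiles n k M" "c' \<in> unit_tiles n N (k * M)"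
    | "c \<in> unit_tiles n N (k * M)" "c' \<in> block_tiles n k M"
    | "c \<in> unit_tiles n N (k * M)" "c' \<in> unit_tiles n N (k * M)"
    using c c' unfolding C_def by blast
  then show "subgrid n (fst c) (snd c) \<inter> subgrid n (fst c') (snd c') = {}"
  proof cases
    case 1
    then obtain \<alpha> \<alpha>' where "c = ((\<lambda>i. int M * \<alpha> i), M)" "c' = ((\<lambda>i. int M * \<alpha>' i), M)"
      by (auto simp: block_tiles_def)
    with ne blocks_disjoint[OF M, of n \<alpha> \<alpha>'] show ?thesis by auto
  next
    case 2
    with in_block[of c] show ?thesis by (auto simp: unit_tiles_def)
  next
    case 3
    with in_block[of c'] show ?thesis by (auto simp: unit_tiles_def)
  next
    case 4
    with ne show ?thesis by (auto simp: unit_tiles_def)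
  qed
qed

lemma dimU_cube_tiling_bound:
  assumes m2: "m \<ge> 2"
    and distinct_exps: "\<forall>j<m. \<forall>j'<m. j \<noteq> j' \<longrightarrow> (\<exists>i<n. t j i \<noteq> t j' i)"
    and M: "1 \<le> M"
  shows "dimU n m a t N \<le>
    int ((N div M) ^ n) * dimU n m a t M + int (N ^ n - (N div M * M) ^ n) * dimU n m a t 1"
proof -
  define k where "k = N div M"
  define K where "K = k * M"
  define CA where "CA = block_tiles n k M"
  define CB where "CB = unit_tiles n N K"
  have KN: "K \<le> N" unfolding K_def k_def by simp
  have disj_CA_CB: "CA \<inter> CB = {}"
    using block_in_grid[of _ n k "\<lambda>_. 0" M] M
    by (auto simp: CA_def CB_def block_tiles_def unit_tiles_def grid_def K_def)
  have "dimU n m a t N \<le> (\<Sum>c\<in>CA \<union> CB. dimU n m a t (snd c))"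
  proof (rule dimU_subadditive_tiles[OF m2 distinct_exps])
    show "finite (CA \<union> CB)"
      by (simp add: CA_def CB_def block_tiles_def unit_tiles_def finite_grid)
    show "\<forall>(v, q)\<in>CA \<union> CB. \<forall>i\<ge>n. v i = 0"
      by (auto simp: CA_def CB_def block_tiles_def unit_tiles_def grid_def)
    show "(\<Union>c\<in>CA \<union> CB. subgrid n (fst c) (snd c)) = grid n N"
      using grid_mono[OF KN]
      unfolding UN_Un CA_def CB_def Union_block_tiles[OF M] Union_unit_tiles K_def[symmetric]
      by (simp add: Un_absorb1)
    show "\<forall>c\<in>CA \<union> CB. \<forall>c'\<in>CA \<union> CB. c \<noteq> c' \<longrightarrow>
        subgrid n (fst c) (snd c) \<inter> subgrid n (fst c') (snd c') = {}"
      unfolding CA_def CB_def K_def by (rule block_tiles_unit_tiles_disjoint[OF M])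
  qed
  also have "\<dots> = (\<Sum>c\<in>CA. dimU n m a t (snd c)) + (\<Sum>c\<in>CB. dimU n m a t (snd c))"
    by (rule sum.union_disjoint[OF _ _ disj_CA_CB])
      (simp_all add: CA_def CB_def block_tiles_def unit_tiles_def finite_grid)
  also have "\<dots> = (\<Sum>c\<in>CA. dimU n m a t M) + (\<Sum>c\<in>CB. dimU n m a t 1)"
    by (intro arg_cong2[where f = "(+)"] sum.cong) (auto simp: CA_def CB_def block_tiles_def unit_tiles_def)
  also have "\<dots> = int (card CA) * dimU n m a t M + int (card CB) * dimU n m a t 1"
    by simp
  also have "card CA = k ^ n"
    unfolding CA_def block_tiles_def using M
    by (subst card_image) (auto simp: inj_on_def fun_eq_iff card_grid)
  also have "card CB = N ^ n - K ^ n"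
    unfolding CB_def unit_tiles_def by (subst card_image)
      (auto simp: inj_on_def card_Diff_subset[OF finite_grid grid_mono[OF KN]] card_grid)
  finally show ?thesis by (simp add: k_def K_def)
qed

lemma tiling_bound_normalized:
  fixes f :: "nat \<Rightarrow> real"
  assumes f0: "0 \<le> f M" "0 \<le> f 1" and M: "1 \<le> M" "M \<le> N"
    and bound: "f N \<le> real ((N div M) ^ n) * f M + real (N ^ n - (N div M * M) ^ n) * f 1"
  shows "f N / real N ^ n \<le> f M / real M ^ n + f 1 * real n * real M / real N"
proof -
  define K where "K = N div M * M"
  define rho where "rho = (real K / real N) ^ n"
  have N0: "real N > 0" and M0: "real M > 0" using M by auto
  have KN: "K \<le> N" unfolding K_def by simp
  have "real N - real M \<le> real K"
  proof -
    have "N = K + N mod M" unfolding K_def by simp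
    moreover have "N mod M < M" using M by simp
    ultimately show ?thesis by linarith
  qed
  then have "(real N - real M) / real N \<le> real K / real N"
    using N0 by (intro divide_right_mono) auto
  then have "1 - real M / real N \<le> real K / real N"
    using N0 by (simp add: diff_divide_distrib)
  moreover have "0 \<le> 1 - real M / real N" using M N0 by simp
  ultimately have "(1 - real M / real N) ^ n \<le> rho" unfolding rho_def by (rule power_mono)
  moreover have "1 - real n * (real M / real N) \<le> (1 - real M / real N) ^ n"
    using Bernoulli_inequality[of "- (real M / real N)" n] M N0 by (simp add: field_simps)
  ultimately have rho_lower: "1 - rho \<le> real n * real M / real N" by simp
  have rho1: "rho \<le> 1" unfolding rho_def using KN N0 by (intro power_le_one) auto
  have "f N / real N ^ n \<le> (real ((N div M) ^ n) * f M + (real N ^ n - real K ^ n) * f 1) / real N ^ n"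
    using bound N0 power_mono[OF KN, of n] by (simp add: divide_right_mono K_def of_nat_diff)
  also have "\<dots> = rho * (f M / real M ^ n) + (1 - rho) * f 1"
    using M0 N0 by (simp add: rho_def K_def power_divide power_mult_distrib field_simps)
  also have "\<dots> \<le> f M / real M ^ n + real n * real M / real N * f 1"
    using rho1 rho_lower f0 M0 by (intro add_mono mult_right_mono mult_left_le_one_le) (auto simp: rho_def)
  finally show ?thesis by (simp add: mult.commute mult.left_commute)
qed

lemma LIMSEQ_INF_of_le_plus_div:
  fixes g c :: "nat \<Rightarrow> real"
  assumes bdd: "bdd_below (g ` {1..})"
    and le: "\<And>M N. 1 \<le> M \<Longrightarrow> M \<le> N \<Longrightarrow> g N \<le> g M + c M / real N"
  shows "g \<longlonglongrightarrow> (INF N\<in>{1..}. g N)"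
proof (rule order_tendstoI)
  fix y assume "y < (INF N\<in>{1..}. g N)"
  then have "y < g N" if "N \<ge> 1" for N
    using cINF_lower[OF bdd, of N] that by fastforce
  then show "eventually (\<lambda>N. y < g N) sequentially"
    unfolding eventually_sequentially by blast
next
  fix y assume y: "(INF N\<in>{1..}. g N) < y"
  define L where "L = (INF N\<in>{1..}. g N)"
  have "Inf (g ` {1..}) < (L + y) / 2" using y by (simp add: L_def)
  moreover have "g ` {1..} \<noteq> {}" by auto
  ultimately have "\<exists>x\<in>g ` {1..}. x < (L + y) / 2" using cInf_less_iff[OF _ bdd] by blast
  then obtain M where M: "M \<ge> 1" "g M < (L + y) / 2" by auto
  have "(\<lambda>N. c M / real N) \<longlonglongrightarrow> 0" by (rule lim_const_over_n)
  then have "eventually (\<lambda>N. c M / real N < (y - L) / 2) sequentially"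
    using y unfolding L_def by (intro order_tendstoD(2)) auto
  with eventually_ge_at_top[of M] show "eventually (\<lambda>N. g N < y) sequentially"
  proof eventually_elim
    case (elim N)
    have "g N \<le> g M + c M / real N" using le M(1) elim(1) .
    also have "\<dots> < (L + y) / 2 + (y - L) / 2" using M(2) elim(2) by (rule add_strict_mono)
    also have "\<dots> = y" by (simp add: field_simps)
    finally show ?case .
  qed
qed

theorem mainTheorem1:
  fixes n m :: nat and a :: "nat \<Rightarrow> real" and t :: "nat \<Rightarrow> nat \<Rightarrow> int"
  assumes m2: "m \<ge> 2"
    and distinct_exps: "\<forall>j<m. \<forall>j'<m. j \<noteq> j' \<longrightarrow> (\<exists>i<n. t j i \<noteq> t j' i)"
  shows "(\<forall>N R (v :: nat \<Rightarrow> nat \<Rightarrow> int) (q :: nat \<Rightarrow> nat).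
            N \<ge> 1 \<and>
            (\<forall>r<R. q r \<ge> 1 \<and> (\<forall>i\<ge>n. v r i = 0) \<and> subgrid n (v r) (q r) \<subseteq> grid n N) \<and>
            (\<forall>r<R. \<forall>r'<R. r \<noteq> r' \<longrightarrow> subgrid n (v r) (q r) \<inter> subgrid n (v r') (q r') = {}) \<and>
            (\<Union>r<R. subgrid n (v r) (q r)) = grid n N
          \<longrightarrow> dimU n m a t N \<le> (\<Sum>r<R. dimU n m a t (q r)))
       \<and> ((\<lambda>N. real_of_int (dimU n m a t N) / real N ^ n)
            \<longlonglongrightarrow> (INF N\<in>{1..}. real_of_int (dimU n m a t N) / real N ^ n))"
proof (intro conjI allI impI)
  fix N R :: nat and v :: "nat \<Rightarrow> nat \<Rightarrow> int" and q :: "nat \<Rightarrow> nat"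
  assume "N \<ge> 1 \<and>
            (\<forall>r<R. q r \<ge> 1 \<and> (\<forall>i\<ge>n. v r i = 0) \<and> subgrid n (v r) (q r) \<subseteq> grid n N) \<and>
            (\<forall>r<R. \<forall>r'<R. r \<noteq> r' \<longrightarrow> subgrid n (v r) (q r) \<inter> subgrid n (v r') (q r') = {}) \<and>
            (\<Union>r<R. subgrid n (v r) (q r)) = grid n N"
  then show "dimU n m a t N \<le> (\<Sum>r<R. dimU n m a t (q r))"
    by (intro dimU_subadditive[OF m2 distinct_exps, where v = v and q = q]) auto
next
  let ?d = "\<lambda>N. real_of_int (dimU n m a t N)"
  have d0: "0 \<le> ?d N" for N using dimU_nonneg[OF m2 distinct_exps] by simp
  show "(\<lambda>N. ?d N / real N ^ n) \<longlonglongrightarrow> (INF N\<in>{1..}. ?d N / real N ^ n)"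
  proof (rule LIMSEQ_INF_of_le_plus_div)
    show "bdd_below ((\<lambda>N. ?d N / real N ^ n) ` {1..})"
      using d0 by (intro bdd_belowI[of _ 0]) auto
    fix M N :: nat assume M: "1 \<le> M" "M \<le> N"
    have "?d N \<le> real_of_int (int ((N div M) ^ n) * dimU n m a t M + int (N ^ n - (N div M * M) ^ n) * dimU n m a t 1)"
      using dimU_cube_tiling_bound[OF m2 distinct_exps M(1)] by (simp only: of_int_le_iff)
    then have "?d N \<le> real ((N div M) ^ n) * ?d M + real (N ^ n - (N div M * M) ^ n) * ?d 1"
      by simp
    then show "?d N / real N ^ n \<le> ?d M / real M ^ n + ?d 1 * real n * real M / real N"
      by (rule tiling_bound_normalized[OF d0 d0 M])
  qed
qed

end
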